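(* Fix a constant $0<\alpha<1$. For $D\le \alpha n$, the minimum size of advice sufficient to perform topology recognition in time $D$ in the class of graphs of size $n$ and diameter $D$ is in $\Theta(n\log n)$ (the upper bound holds for labeled topology recognition and the lower bound for anonymous topology recognition), with constants depending only on $\alpha$.
   Context: Graphs are finite, simple, undirected, connected, with no node labels; at each node of degree $d$ the incident edges carry distinct port numbers $0,\dots,d-1$ (no coherence between endpoints). Isomorphism is a bijection of nodes preserving edges and port numbers at both endpoints. Size = number of nodes; $\log$ is base 2. Communication model (LOCAL): synchronous rounds, all nodes start simultaneously; in each round every node may send arbitrary messages to all neighbours, receives their messages (knowing the arrival port), and performs arbitrary local computation. Initially a node knows only its degree and its advice. Advice: an oracle knowing the graph assigns each node a binary string; the size of advice is the maximum string length. All nodes run the same deterministic algorithm. Anonymous topology recognition: every node outputs a port-labeled graph isomorphic to $G$. Labeled topology recognition: all nodes output the same port-labeled graph $H$ with distinct node labels and each node its own label, such that some isomorphism $G\to H$ maps every node to the node carrying the label it output. The minimum size of advice sufficient for time $T$ on a class is the least $s$ such that some deterministic algorithm and, for each graph of the class, some advice assignment of size at most $s$ accomplish the task within $T$ rounds on every graph of the class. *)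

theory Defs
  imports Complex_Main
begin

text \<open>A port-labeled graph with n nodes is represented canonically as a list g of length n;
  the nodes are 0..<n, the degree of node v is length (g!v), and g!v!p is the neighbour of v
  reached through port p (0 \<le> p < deg v).\<close>

type_synonym pgraph = "nat list list"

definition pg_edges :: "pgraph \<Rightarrow> (nat \<times> nat) set" where
  "pg_edges g = {(u, v). u < length g \<and> v \<in> set (g ! u)}"

definition wf_pgraph :: "pgraph \<Rightarrow> bool" where
  "wf_pgraph g \<longleftrightarrow> length g \<ge> 1 \<and>
     (\<forall>v < length g. distinct (g ! v) \<and>
        (\<forall>u \<in> set (g ! v). u < length g \<and> u \<noteq> v \<and> v \<in> set (g ! u))) \<and>
     (\<forall>u < length g. \<forall>v < length g. (u, v) \<in> (pg_edges g)\<^sup>*)"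

definition pg_dist :: "pgraph \<Rightarrow> nat \<Rightarrow> nat \<Rightarrow> nat" where
  "pg_dist g u v = (LEAST k. (u, v) \<in> (pg_edges g) ^^ k)"

definition diameter :: "pgraph \<Rightarrow> nat" where
  "diameter g = Max {pg_dist g u v | u v. u < length g \<and> v < length g}"

definition port :: "pgraph \<Rightarrow> nat \<Rightarrow> nat \<Rightarrow> nat" where
  "port g u v = (THE q. q < length (g ! u) \<and> g ! u ! q = v)"

definition pg_iso_map :: "(nat \<Rightarrow> nat) \<Rightarrow> pgraph \<Rightarrow> pgraph \<Rightarrow> bool" where
  "pg_iso_map f g h \<longleftrightarrow> bij_betw f {0..<length g} {0..<length h} \<and>
     (\<forall>v < length g. h ! (f v) = map f (g ! v))"

definition pg_isomorphic :: "pgraph \<Rightarrow> pgraph \<Rightarrow> bool" where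
  "pg_isomorphic g h \<longleftrightarrow> (\<exists>f. pg_iso_map f g h)"

definition graph_class :: "nat \<Rightarrow> nat \<Rightarrow> pgraph set" where
  "graph_class n D = {g. wf_pgraph g \<and> length g = n \<and> diameter g = D}"

text \<open>Universal type of finite data used for local states and messages.\<close>
datatype sexp = SNat nat | SBits "bool list" | SList "sexp list"

text \<open>A deterministic algorithm (the same at all nodes): initial state from degree and advice;
  message sent on each port in the current state; new state from the old state and the list
  of received messages indexed by arrival port; output function.\<close>
record 'o local_alg =
  init :: "nat \<Rightarrow> bool list \<Rightarrow> sexp"
  send :: "sexp \<Rightarrow> nat \<Rightarrow> sexp"
  step :: "sexp \<Rightarrow> sexp list \<Rightarrow> sexp"
  out :: "sexp \<Rightarrow> 'o"

primrec run :: "'o local_alg \<Rightarrow> pgraph \<Rightarrow> (nat \<Rightarrow> bool list) \<Rightarrow> nat \<Rightarrow> nat \<Rightarrow> sexp" where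
  "run A g adv 0 = (\<lambda>v. init A (length (g ! v)) (adv v))"
| "run A g adv (Suc t) = (\<lambda>v. step A (run A g adv t v)
      (map (\<lambda>u. send A (run A g adv t u) (port g u v)) (g ! v)))"

definition advice_size :: "pgraph \<Rightarrow> (nat \<Rightarrow> bool list) \<Rightarrow> nat" where
  "advice_size g adv = Max ((\<lambda>v. length (adv v)) ` {0..<length g})"

definition anon_TR :: "pgraph local_alg \<Rightarrow> pgraph \<Rightarrow> (nat \<Rightarrow> bool list) \<Rightarrow> nat \<Rightarrow> bool" where
  "anon_TR A g adv T \<longleftrightarrow>
     (\<forall>v < length g. pg_isomorphic g (out A (run A g adv T v)))"

definition labeled_TR :: "(pgraph \<times> nat) local_alg \<Rightarrow> pgraph \<Rightarrow> (nat \<Rightarrow> bool list) \<Rightarrow> nat \<Rightarrow> bool" where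
  "labeled_TR A g adv T \<longleftrightarrow>
     (\<exists>H f. pg_iso_map f g H \<and> (\<forall>v < length g. out A (run A g adv T v) = (H, f v)))"

definition min_advice ::
  "('o local_alg \<Rightarrow> pgraph \<Rightarrow> (nat \<Rightarrow> bool list) \<Rightarrow> nat \<Rightarrow> bool) \<Rightarrow> nat \<Rightarrow> pgraph set \<Rightarrow> nat" where
  "min_advice task T C = (LEAST s. \<exists>A. \<forall>g \<in> C. \<exists>adv. advice_size g adv \<le> s \<and> task A g adv T)"

end

theory Submission
  imports Defs "HOL-Combinatorics.Multiset_Permutations" "HOL-Library.Log_Nat"
begin

text \<open>Upper bound: every node is told its own identity and port list in O(n log n) bits;
  flooding these records for D rounds gives every node the records of all nodes within distance D,
  i.e. of the whole graph, together with its own label.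
  Lower bound: attach a path of length D to a clique on m = n - D nodes whose internal port
  orderings are arbitrary, giving ((m-1)!)^m port-labeled graphs. The far end of the path sees,
  within D rounds, nothing but the advice; an isomorphism from the graph to its output together
  with the advice vector determines the graph. Hence ((m-1)!)^m \<le> 2^(n(s+1)) n^n, which forces
  s = \<Omega>(n log n) as soon as m \<ge> (1 - \<alpha>) n.\<close>

section \<open>Graphs, runs and advice\<close>

lemma wf_pgraphD:
  assumes "wf_pgraph g"
  shows "length g \<ge> 1" "v < length g \<Longrightarrow> distinct (g ! v)"
    "v < length g \<Longrightarrow> u \<in> set (g ! v) \<Longrightarrow> u < length g"
    "v < length g \<Longrightarrow> u \<in> set (g ! v) \<Longrightarrow> u \<noteq> v"
    "v < length g \<Longrightarrow> u \<in> set (g ! v) \<Longrightarrow> v \<in> set (g ! u)"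
    "u < length g \<Longrightarrow> v < length g \<Longrightarrow> (u, v) \<in> (pg_edges g)\<^sup>*"
  using assms unfolding wf_pgraph_def by blast+

lemma pg_dist_le: "(u, v) \<in> pg_edges g ^^ k \<Longrightarrow> pg_dist g u v \<le> k"
  unfolding pg_dist_def by (rule Least_le)

lemma pg_dist_path: "(u, v) \<in> pg_edges g ^^ k \<Longrightarrow> (u, v) \<in> pg_edges g ^^ pg_dist g u v"
  unfolding pg_dist_def by (rule LeastI)

lemma finite_pg_dists: "finite {pg_dist g u v | u v. u < length g \<and> v < length g}"
proof -
  have "{pg_dist g u v | u v. u < length g \<and> v < length g} =
      (\<lambda>(u, v). pg_dist g u v) ` ({..<length g} \<times> {..<length g})"
    by auto
  then show ?thesis by simp
qed

lemma pg_dist_le_diameter: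
  "u < length g \<Longrightarrow> v < length g \<Longrightarrow> pg_dist g u v \<le> diameter g"
  unfolding diameter_def by (rule Max_ge[OF finite_pg_dists]) blast

lemma diameter_eqI:
  assumes reach: "\<And>u v. u < length g \<Longrightarrow> v < length g \<Longrightarrow> \<exists>k\<le>D. (u, v) \<in> pg_edges g ^^ k"
    and far: "u < length g" "v < length g" "\<And>k. (u, v) \<in> pg_edges g ^^ k \<Longrightarrow> D \<le> k"
  shows "diameter g = D"
proof -
  have le: "pg_dist g x y \<le> D" if "x < length g" "y < length g" for x y
    using reach[OF that] pg_dist_le le_trans by blast
  have "pg_dist g u v = D"
    using reach[OF far(1,2)] far(3) pg_dist_path le[OF far(1,2)] by (meson le_antisym)
  then show ?thesis
    unfolding diameter_def using le far(1,2) by (intro Max_eqI[OF finite_pg_dists]) auto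
qed

lemma run_cong_advice:
  assumes "wf_pgraph g" "\<And>v. v < length g \<Longrightarrow> adv v = adv' v" "v < length g"
  shows "run A g adv t v = run A g adv' t v"
  using assms(3)
proof (induction t arbitrary: v)
  case 0
  then show ?case using assms(2) by simp
next
  case (Suc t)
  have "run A g adv t u = run A g adv' t u" if "u \<in> set (g ! v)" for u
    using Suc wf_pgraphD(3)[OF assms(1)] that by blast
  then show ?case using Suc by (simp cong: map_cong)
qed

definition map_output :: "('a \<Rightarrow> 'b) \<Rightarrow> 'a local_alg \<Rightarrow> 'b local_alg" where
  "map_output h A = \<lparr>init = init A, send = send A, step = step A, out = h \<circ> out A\<rparr>"

lemma run_map_output [simp]: "run (map_output h A) g adv t = run A g adv t"
  by (induction t) (simp_all add: map_output_def)

lemma out_map_output [simp]: "out (map_output h A) = h \<circ> out A"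
  by (simp add: map_output_def)

lemma anon_TR_map_output_fst: "labeled_TR A g adv T \<Longrightarrow> anon_TR (map_output fst A) g adv T"
  unfolding labeled_TR_def anon_TR_def pg_isomorphic_def by auto

definition solvable_with ::
  "('o local_alg \<Rightarrow> pgraph \<Rightarrow> (nat \<Rightarrow> bool list) \<Rightarrow> nat \<Rightarrow> bool) \<Rightarrow> nat \<Rightarrow> pgraph set \<Rightarrow> nat \<Rightarrow> bool"
  where "solvable_with task T C s \<longleftrightarrow> (\<exists>A. \<forall>g \<in> C. \<exists>adv. advice_size g adv \<le> s \<and> task A g adv T)"

lemma min_advice_le: "solvable_with task T C s \<Longrightarrow> min_advice task T C \<le> s"
  unfolding min_advice_def solvable_with_def by (rule Least_le)

lemma solvable_with_min_advice:
  "solvable_with task T C s \<Longrightarrow> solvable_with task T C (min_advice task T C)"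
  unfolding min_advice_def solvable_with_def by (rule LeastI)

lemma solvable_anon_if_labeled:
  "solvable_with labeled_TR T C s \<Longrightarrow> solvable_with anon_TR T C s"
  unfolding solvable_with_def by (meson anon_TR_map_output_fst)

lemma advice_size_ge: "v < length g \<Longrightarrow> length (adv v) \<le> advice_size g adv"
  unfolding advice_size_def by (rule Max_ge) auto

definition pg_pullback :: "pgraph \<Rightarrow> nat list \<Rightarrow> pgraph" where
  "pg_pullback H L = map (\<lambda>v. map (\<lambda>x. THE y. y < length L \<and> L ! y = x) (H ! (L ! v))) [0..<length L]"

lemma pg_pullback_iso:
  assumes iso: "pg_iso_map f g H" and w: "wf_pgraph g"
  shows "pg_pullback H (map f [0..<length g]) = g"
proof (rule nth_equalityI)
  show "length (pg_pullback H (map f [0..<length g])) = length g"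
    by (simp add: pg_pullback_def)
  fix v assume "v < length (pg_pullback H (map f [0..<length g]))"
  then have v: "v < length g" by (simp add: pg_pullback_def)
  have inj: "inj_on f {0..<length g}"
    using iso unfolding pg_iso_map_def by (blast dest: bij_betw_imp_inj_on)
  have Hv: "H ! f v = map f (g ! v)"
    using iso v unfolding pg_iso_map_def by blast
  have "(THE y. y < length g \<and> map f [0..<length g] ! y = f x) = x" if x: "x \<in> set (g ! v)" for x
  proof (rule the_equality)
    have "x < length g" using wf_pgraphD(3)[OF w v x] .
    then show "x < length g \<and> map f [0..<length g] ! x = f x" by simp
    fix y assume y: "y < length g \<and> map f [0..<length g] ! y = f x"
    then have "f y = f x" by auto
    from inj_onD[OF inj this] y \<open>x < length g\<close> show "y = x" by simp
  qed
  then show "pg_pullback H (map f [0..<length g]) ! v = g ! v"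
    using v Hv by (simp add: pg_pullback_def map_idI)
qed

section \<open>Upper bound: flooding the advice\<close>

text \<open>A record is a node followed by its neighbours in port order.\<close>

definition node_records :: "nat \<Rightarrow> nat list set" where
  "node_records n = {xs. xs \<noteq> [] \<and> length xs \<le> n \<and> set xs \<subseteq> {..<n}}"

definition record_bits :: "nat \<Rightarrow> nat" where
  "record_bits n = (n + 1) * ceillog2 (n + 1)"

lemma finite_node_records: "finite (node_records n)"
  unfolding node_records_def
  by (rule finite_subset[OF _ finite_lists_length_le[of "{..<n}" n]]) auto

lemma card_node_records: "card (node_records n) \<le> 2 ^ record_bits n"
proof -
  have "node_records n \<subseteq> {xs. set xs \<subseteq> {..<n} \<and> length xs \<le> n}"
    unfolding node_records_def by auto
  then have "card (node_records n) \<le> card {xs. set xs \<subseteq> {..<n} \<and> length xs \<le> n}"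
    by (intro card_mono finite_lists_length_le) auto
  also have "\<dots> = (\<Sum>i\<le>n. n ^ i)"
    by (subst card_lists_length_le) auto
  also have "\<dots> \<le> (\<Sum>i\<le>n. (n + 1) ^ n)"
  proof (rule sum_mono)
    fix i assume "i \<in> {..n}"
    then have "n ^ i \<le> (n + 1) ^ i \<and> (n + 1) ^ i \<le> (n + 1) ^ n"
      by (auto intro: power_mono power_increasing)
    then show "n ^ i \<le> (n + 1) ^ n" by (rule conjE) (rule order.trans)
  qed
  also have "\<dots> = (n + 1) ^ (n + 1)" by simp
  also have "\<dots> \<le> (2 ^ ceillog2 (n + 1)) ^ (n + 1)"
    by (intro power_mono le_two_power_ceillog2) simp
  also have "\<dots> = 2 ^ record_bits n"
    unfolding record_bits_def by (metis power_mult mult.commute)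
  finally show ?thesis .
qed

lemma ex_inj_bit_code:
  assumes "finite X" "card X \<le> 2 ^ l"
  shows "\<exists>c. c ` X \<subseteq> {bs :: bool list. length bs = l} \<and> inj_on c X"
proof (rule card_le_inj[OF assms(1)])
  have bits: "{bs :: bool list. length bs = l} = {bs. set bs \<subseteq> UNIV \<and> length bs = l}" by auto
  show "finite {bs :: bool list. length bs = l}"
    unfolding bits by (rule finite_lists_length_eq) simp
  have "card {bs :: bool list. length bs = l} = 2 ^ l"
    unfolding bits by (simp only: card_lists_length_eq finite_UNIV card_UNIV_bool)
  with assms(2) show "card X \<le> card {bs :: bool list. length bs = l}" by simp
qed

definition record_code :: "nat \<Rightarrow> nat list \<Rightarrow> bool list" where
  "record_code n = (SOME c. c ` node_records n \<subseteq> {bs. length bs = record_bits n} \<and>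
     inj_on c (node_records n))"

lemma record_code:
  "record_code n ` node_records n \<subseteq> {bs. length bs = record_bits n}"
  "inj_on (record_code n) (node_records n)"
  using someI_ex[OF ex_inj_bit_code[OF finite_node_records card_node_records]]
  unfolding record_code_def by auto

fun nat_of_sexp :: "sexp \<Rightarrow> nat" where
  "nat_of_sexp (SNat k) = k"
| "nat_of_sexp _ = 0"

fun list_of_sexp :: "sexp \<Rightarrow> sexp list" where
  "list_of_sexp (SList xs) = xs"
| "list_of_sexp _ = []"

definition sexp_of_records :: "nat list list \<Rightarrow> sexp" where
  "sexp_of_records K = SList (map (\<lambda>r. SList (map SNat r)) K)"

definition records_of_sexp :: "sexp \<Rightarrow> nat list list" where
  "records_of_sexp s = map (\<lambda>x. map nat_of_sexp (list_of_sexp x)) (list_of_sexp s)"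

lemma records_of_sexp_of_records [simp]: "records_of_sexp (sexp_of_records K) = K"
  by (simp add: records_of_sexp_def sexp_of_records_def o_def)

definition graph_of_records :: "nat \<Rightarrow> nat list list \<Rightarrow> pgraph" where
  "graph_of_records n K = map (\<lambda>i. tl (the (find (\<lambda>r. r \<noteq> [] \<and> hd r = i) K))) [0..<n]"

definition flood_alg :: "nat \<Rightarrow> (pgraph \<times> nat) local_alg" where
  "flood_alg n =
     \<lparr>init = (\<lambda>_ bs. sexp_of_records [inv_into (node_records n) (record_code n) bs]),
      send = (\<lambda>s _. s),
      step = (\<lambda>s ms. sexp_of_records (records_of_sexp s @ concat (map records_of_sexp ms))),
      out = (\<lambda>s. (graph_of_records n (records_of_sexp s), hd (hd (records_of_sexp s))))\<rparr>"

definition record_advice :: "pgraph \<Rightarrow> nat \<Rightarrow> bool list" where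
  "record_advice g v = record_code (length g) (v # g ! v)"

lemma own_record_in_node_records:
  assumes w: "wf_pgraph g" and v: "v < length g"
  shows "v # g ! v \<in> node_records (length g)"
proof -
  have sub: "set (g ! v) \<subseteq> {..<length g} - {v}"
    using wf_pgraphD(3,4)[OF w v] by auto
  have "length (g ! v) = card (set (g ! v))"
    using wf_pgraphD(2)[OF w v] by (simp add: distinct_card)
  also have "\<dots> \<le> card ({..<length g} - {v})" using sub by (intro card_mono) auto
  finally show ?thesis using v sub unfolding node_records_def by auto
qed

lemma advice_size_record_advice: "wf_pgraph g \<Longrightarrow> advice_size g (record_advice g) = record_bits (length g)"
proof -
  assume w: "wf_pgraph g"
  have "length (record_advice g v) = record_bits (length g)" if "v < length g" for v
    using record_code(1) own_record_in_node_records[OF w that] unfolding record_advice_def by blast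
  then have "(\<lambda>v. length (record_advice g v)) ` {0..<length g} = {record_bits (length g)}"
    using wf_pgraphD(1)[OF w] by force
  then show ?thesis by (simp add: advice_size_def)
qed

definition knows_ball :: "pgraph \<Rightarrow> nat \<Rightarrow> nat \<Rightarrow> nat list list \<Rightarrow> bool" where
  "knows_ball g t v K \<longleftrightarrow> (\<exists>K'. K = (v # g ! v) # K') \<and>
     set K \<subseteq> {u # g ! u | u. u < length g} \<and>
     (\<forall>k\<le>t. \<forall>x. (v, x) \<in> pg_edges g ^^ k \<longrightarrow> x # g ! x \<in> set K)"

lemma knows_ballD:
  assumes "knows_ball g t v K"
  shows "v # g ! v \<in> set K" "set K \<subseteq> {u # g ! u | u. u < length g}"
    "k \<le> t \<Longrightarrow> (v, x) \<in> pg_edges g ^^ k \<Longrightarrow> x # g ! x \<in> set K"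
  using assms unfolding knows_ball_def by auto

lemma knows_ball_step:
  assumes w: "wf_pgraph g" and v: "v < length g"
    and IH: "\<And>u. u < length g \<Longrightarrow> knows_ball g t u (K u)"
  shows "knows_ball g (Suc t) v (K v @ concat (map K (g ! v)))"
proof -
  have nbr: "u < length g" if "u \<in> set (g ! v)" for u
    using wf_pgraphD(3)[OF w v that] .
  obtain K' where own: "K v = (v # g ! v) # K'"
    using IH[OF v] unfolding knows_ball_def by blast
  have "set (K u) \<subseteq> {u # g ! u | u. u < length g}" if "u \<in> set (g ! v)" for u
    using knows_ballD(2)[OF IH[OF nbr[OF that]]] .
  then have sub: "set (K v @ concat (map K (g ! v))) \<subseteq> {u # g ! u | u. u < length g}"
    using knows_ballD(2)[OF IH[OF v]] by auto
  have ball: "x # g ! x \<in> set (K v @ concat (map K (g ! v)))"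
    if "k \<le> Suc t" "(v, x) \<in> pg_edges g ^^ k" for k x
  proof (cases k)
    case 0
    with that(2) own show ?thesis by simp
  next
    case (Suc j)
    with that obtain u where u: "(v, u) \<in> pg_edges g" "(u, x) \<in> pg_edges g ^^ j" "j \<le> t"
      by (metis Suc_le_mono relpow_Suc_E2)
    then have uv: "u \<in> set (g ! v)" by (simp add: pg_edges_def)
    have "x # g ! x \<in> set (K u)"
      using knows_ballD(3)[OF IH[OF nbr[OF uv]] u(3,2)] .
    with uv show ?thesis by auto
  qed
  show ?thesis
    unfolding knows_ball_def using own sub ball by auto
qed

lemma records_flood_Suc:
  "records_of_sexp (run (flood_alg n) g adv (Suc t) v) =
     records_of_sexp (run (flood_alg n) g adv t v) @
     concat (map (\<lambda>u. records_of_sexp (run (flood_alg n) g adv t u)) (g ! v))"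
  by (simp add: flood_alg_def o_def)

lemma flood_knows_ball:
  assumes w: "wf_pgraph g" and v: "v < length g"
  shows "knows_ball g t v (records_of_sexp (run (flood_alg (length g)) g (record_advice g) t v))"
  using v
proof (induction t arbitrary: v)
  case 0
  then show ?case
    using inv_into_f_f[OF record_code(2) own_record_in_node_records[OF w 0]]
    by (simp add: flood_alg_def record_advice_def knows_ball_def)
next
  case (Suc t)
  show ?case
    unfolding records_flood_Suc by (rule knows_ball_step[OF w Suc.prems Suc.IH])
qed

lemma graph_of_records_eq:
  assumes "set K = {u # g ! u | u. u < length g}"
  shows "graph_of_records (length g) K = g"
proof (rule nth_equalityI)
  show "length (graph_of_records (length g) K) = length g"
    by (simp add: graph_of_records_def)
  fix i assume "i < length (graph_of_records (length g) K)"
  then have i: "i < length g" by (simp add: graph_of_records_def)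
  let ?P = "\<lambda>r. r \<noteq> [] \<and> hd r = i"
  have "i # g ! i \<in> set K" using assms i by blast
  then have "find ?P K \<noteq> None" unfolding find_None_iff by force
  then obtain r where r: "find ?P K = Some r" by auto
  then have "r \<in> set K" "?P r" by (auto simp: find_Some_iff nth_mem)
  with assms have "r = i # g ! i" by auto
  moreover have "graph_of_records (length g) K ! i = tl (the (find ?P K))"
    using i by (simp add: graph_of_records_def)
  ultimately show "graph_of_records (length g) K ! i = g ! i"
    using r by simp
qed

lemma labeled_TR_flood:
  assumes w: "wf_pgraph g"
  shows "labeled_TR (flood_alg (length g)) g (record_advice g) (diameter g)"
  unfolding labeled_TR_def
proof (intro exI conjI allI impI)
  show "pg_iso_map id g g" unfolding pg_iso_map_def by simp
  fix v assume v: "v < length g"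
  define K where "K = records_of_sexp (run (flood_alg (length g)) g (record_advice g) (diameter g) v)"
  have kb: "knows_ball g (diameter g) v K"
    unfolding K_def by (rule flood_knows_ball[OF w v])
  have "x # g ! x \<in> set K" if x: "x < length g" for x
  proof -
    have "(v, x) \<in> pg_edges g ^^ pg_dist g v x"
      using wf_pgraphD(6)[OF w v x] rtrancl_power pg_dist_path by blast
    with kb pg_dist_le_diameter[OF v x] show ?thesis unfolding knows_ball_def by blast
  qed
  with kb have "set K = {u # g ! u | u. u < length g}"
    unfolding knows_ball_def by blast
  moreover obtain K' where "K = (v # g ! v) # K'"
    using kb unfolding knows_ball_def by blast
  ultimately show "out (flood_alg (length g)) (run (flood_alg (length g)) g (record_advice g) (diameter g) v)
      = (g, id v)"
    using graph_of_records_eq unfolding K_def by (simp add: flood_alg_def)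
qed

lemma solvable_labeled_record_bits:
  "solvable_with labeled_TR D (graph_class n D) (record_bits n)"
  unfolding solvable_with_def graph_class_def
proof (intro exI[of _ "flood_alg n"] ballI)
  fix g assume "g \<in> {g. wf_pgraph g \<and> length g = n \<and> diameter g = D}"
  then have w: "wf_pgraph g" and "length g = n" "diameter g = D" by auto
  then show "\<exists>adv. advice_size g adv \<le> record_bits n \<and> labeled_TR (flood_alg n) g adv D"
    using advice_size_record_advice[OF w] labeled_TR_flood[OF w]
    by (intro exI[of _ "record_advice g"] conjI) auto
qed

lemma record_bits_le:
  assumes "n \<ge> 3"
  shows "real (record_bits n) \<le> 4 * real n * log 2 (real n)"
proof -
  have "real (ceillog2 (n + 1)) < log 2 (real (n + 1)) + 1"
    by (rule ceillog2_less_log) simp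
  also have "\<dots> = log 2 (2 * real (n + 1))"
    by (subst log_mult) auto
  also have "\<dots> = log 2 (2 * real n + 2)"
    by (simp add: algebra_simps)
  also have "\<dots> \<le> log 2 (real n ^ 2)"
  proof -
    have "2 * real n + 2 \<le> real n * real n"
      using assms mult_right_mono[of 3 "real n" "real n"] by linarith
    then show ?thesis using assms by (simp add: power2_eq_square)
  qed
  also have "\<dots> = 2 * log 2 (real n)"
    using assms by (simp add: log_nat_power)
  finally have "real (ceillog2 (n + 1)) \<le> 2 * log 2 (real n)" by simp
  then have "real (n + 1) * real (ceillog2 (n + 1)) \<le> (2 * real n) * (2 * log 2 (real n))"
    using assms by (intro mult_mono) auto
  then show ?thesis by (simp only: record_bits_def of_nat_mult)
qed

section \<open>Lower bound: lollipops with scrambled clique ports\<close>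

text \<open>Nodes 0, \<dots>, D-1 form a path and D-1 is joined to the clique on {D, \<dots>, n-1}.
  At a clique node i the first port leads to D-1 and the remaining ports follow the list
  \<sigma> ! (i - D), an arbitrary ordering of the other clique nodes.\<close>

locale lollipop =
  fixes n D :: nat
  assumes D_pos: "1 \<le> D" and D_less: "D < n"
begin

definition adj :: "nat \<Rightarrow> nat \<Rightarrow> bool" where
  "adj u x \<longleftrightarrow> (u < D \<and> x < D \<and> (x = Suc u \<or> u = Suc x)) \<or> (u = D - 1 \<and> D \<le> x \<and> x < n) \<or>
     (x = D - 1 \<and> D \<le> u \<and> u < n) \<or> (D \<le> u \<and> u < n \<and> D \<le> x \<and> x < n \<and> u \<noteq> x)"

definition row :: "nat list list \<Rightarrow> nat \<Rightarrow> nat list" where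
  "row \<sigma> i = (if i < D
     then (if i = 0 then [] else [i - 1]) @ (if Suc i < D then [Suc i] else [D..<n])
     else (D - 1) # \<sigma> ! (i - D))"

definition E :: "(nat \<times> nat) set" where
  "E = {(u, x). u < n \<and> adj u x}"

definition G :: "nat list list \<Rightarrow> pgraph" where
  "G \<sigma> = map (row \<sigma>) [0..<n]"

definition port_orders :: "nat list list set" where
  "port_orders = {\<sigma>. length \<sigma> = n - D \<and>
     (\<forall>j < n - D. \<sigma> ! j \<in> permutations_of_set ({D..<n} - {D + j}))}"

definition level :: "nat \<Rightarrow> nat" where
  "level i = min i D"

lemma length_G [simp]: "length (G \<sigma>) = n"
  by (simp add: G_def)

lemma nth_G: "i < n \<Longrightarrow> G \<sigma> ! i = row \<sigma> i"
  by (simp add: G_def)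

lemma port_orders_row:
  "\<sigma> \<in> port_orders \<Longrightarrow> D \<le> i \<Longrightarrow> i < n \<Longrightarrow>
     set (\<sigma> ! (i - D)) = {D..<n} - {i} \<and> distinct (\<sigma> ! (i - D))"
  unfolding port_orders_def permutations_of_set_def by auto

lemma adj_sym: "adj u x \<Longrightarrow> adj x u"
  unfolding adj_def by auto

lemma adj_less: "adj u x \<Longrightarrow> x < n"
  unfolding adj_def using D_less by auto

lemma adj_irrefl: "adj u x \<Longrightarrow> u \<noteq> x"
  unfolding adj_def using D_pos by auto

lemma adj_path_iff:
  "u < D \<Longrightarrow> adj u x \<longleftrightarrow> (0 < u \<and> x = u - 1) \<or> (Suc u < D \<and> x = Suc u) \<or> (Suc u = D \<and> D \<le> x \<and> x < n)"
  unfolding adj_def using D_pos D_less by arith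

lemma adj_clique_iff:
  "D \<le> u \<Longrightarrow> u < n \<Longrightarrow> adj u x \<longleftrightarrow> x = D - 1 \<or> (D \<le> x \<and> x < n \<and> u \<noteq> x)"
  unfolding adj_def using D_pos D_less by arith

lemma set_row:
  assumes "\<sigma> \<in> port_orders" "u < n"
  shows "x \<in> set (row \<sigma> u) \<longleftrightarrow> adj u x"
proof (cases "u < D")
  case True
  then show ?thesis
    unfolding adj_path_iff[OF True] row_def by (cases "u = 0"; cases "Suc u < D") auto
next
  case False
  then have Du: "D \<le> u" by simp
  then have "set (row \<sigma> u) = insert (D - 1) ({D..<n} - {u})"
    using port_orders_row[OF assms(1) _ assms(2)] unfolding row_def by simp
  then show ?thesis
    unfolding adj_clique_iff[OF Du assms(2)] by auto
qed

lemma distinct_row: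
  assumes "\<sigma> \<in> port_orders" "u < n"
  shows "distinct (row \<sigma> u)"
proof (cases "u < D")
  case True
  then show ?thesis unfolding row_def by (cases "Suc u < D") auto
next
  case False
  then have set_eq: "set (\<sigma> ! (u - D)) = {D..<n} - {u}" and "distinct (\<sigma> ! (u - D))"
    using port_orders_row[OF assms(1) _ assms(2)] by auto
  moreover have "D - 1 \<notin> set (\<sigma> ! (u - D))"
    unfolding set_eq using D_pos by auto
  ultimately show ?thesis using False unfolding row_def by simp
qed

lemma pg_edges_G: "\<sigma> \<in> port_orders \<Longrightarrow> pg_edges (G \<sigma>) = E"
  unfolding pg_edges_def E_def using set_row by (auto simp: nth_G)

lemma path_walk:
  assumes "i + k < D"
  shows "(i, i + k) \<in> E ^^ k \<and> (i + k, i) \<in> E ^^ k"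
  using assms
proof (induction k)
  case 0
  then show ?case by simp
next
  case (Suc k)
  then have IH: "(i, i + k) \<in> E ^^ k" "(i + k, i) \<in> E ^^ k" by auto
  have "(i + k, i + Suc k) \<in> E" "(i + Suc k, i + k) \<in> E"
    using Suc.prems D_less unfolding E_def adj_def by auto
  then show ?case using relpow_Suc_I[OF IH(1)] relpow_Suc_I2[OF _ IH(2)] by blast
qed

lemma walk_within_D:
  assumes "u < n" "v < n"
  shows "\<exists>k\<le>D. (u, v) \<in> E ^^ k"
proof -
  have hub: "(D - 1, x) \<in> E \<and> (x, D - 1) \<in> E" if "D \<le> x" "x < n" for x
    using that D_less unfolding E_def adj_def by auto
  have to_hub: "\<exists>k<D. (u, D - 1) \<in> E ^^ k \<and> (D - 1, u) \<in> E ^^ k" if "u < D" for u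
    using path_walk[of u "D - 1 - u"] that by (intro exI[of _ "D - 1 - u"]) auto
  consider "u < D" "v < D" | "u < D" "D \<le> v" | "D \<le> u" "v < D" | "D \<le> u" "D \<le> v"
    by linarith
  then show ?thesis
  proof cases
    case 1
    show ?thesis
    proof (cases "u \<le> v")
      case True
      with 1 have "(u, v) \<in> E ^^ (v - u)" using path_walk[of u "v - u"] by simp
      moreover have "v - u \<le> D" using 1 by simp
      ultimately show ?thesis by blast
    next
      case False
      with 1 have "(u, v) \<in> E ^^ (u - v)" using path_walk[of v "u - v"] by simp
      moreover have "u - v \<le> D" using 1 by simp
      ultimately show ?thesis by blast
    qed
  next
    case 2
    then obtain k where k: "k < D" "(u, D - 1) \<in> E ^^ k" using to_hub by blast
    have "(u, v) \<in> E ^^ Suc k"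
      using relpow_Suc_I[OF k(2) conjunct1[OF hub[OF 2(2) assms(2)]]] .
    with k(1) show ?thesis by (blast intro: Suc_leI)
  next
    case 3
    then obtain k where k: "k < D" "(D - 1, v) \<in> E ^^ k" using to_hub by blast
    have "(u, v) \<in> E ^^ Suc k"
      using relpow_Suc_I2[OF conjunct2[OF hub[OF 3(1) assms(1)]] k(2)] .
    with k(1) show ?thesis by (blast intro: Suc_leI)
  next
    case 4
    then show ?thesis
    proof (cases "u = v")
      case True
      then show ?thesis by (intro exI[of _ 0]) auto
    next
      case False
      with 4 assms D_pos show ?thesis unfolding E_def adj_def by (intro exI[of _ 1]) auto
    qed
  qed
qed

lemma level_walk: "(u, x) \<in> E ^^ k \<Longrightarrow> level x \<le> level u + k"
proof (induction k arbitrary: x)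
  case 0
  then show ?case by simp
next
  case (Suc k)
  then obtain y where "(u, y) \<in> E ^^ k" "adj y x"
    by (auto simp: E_def)
  with Suc.IH show ?case
    unfolding adj_def level_def by fastforce
qed

lemma G_in_graph_class:
  assumes \<sigma>: "\<sigma> \<in> port_orders"
  shows "G \<sigma> \<in> graph_class n D"
proof -
  have "wf_pgraph (G \<sigma>)"
    unfolding wf_pgraph_def
  proof (intro conjI allI impI ballI)
    show "1 \<le> length (G \<sigma>)" using D_less by simp
    fix v assume v: "v < length (G \<sigma>)"
    then show "distinct (G \<sigma> ! v)" using distinct_row[OF \<sigma>] by (simp add: nth_G)
    fix u assume "u \<in> set (G \<sigma> ! v)"
    then have a: "adj v u" using set_row[OF \<sigma>] v by (simp add: nth_G)
    show "u < length (G \<sigma>)" "u \<noteq> v" "v \<in> set (G \<sigma> ! u)"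
      using adj_less[OF a] adj_irrefl[OF a] adj_sym[OF a] set_row[OF \<sigma>] by (auto simp: nth_G)
  next
    fix u v assume "u < length (G \<sigma>)" "v < length (G \<sigma>)"
    then show "(u, v) \<in> (pg_edges (G \<sigma>))\<^sup>*"
      using walk_within_D rtrancl_power unfolding pg_edges_G[OF \<sigma>] by fastforce
  qed
  moreover have "diameter (G \<sigma>) = D"
  proof (rule diameter_eqI)
    show "\<exists>k\<le>D. (u, v) \<in> pg_edges (G \<sigma>) ^^ k" if "u < length (G \<sigma>)" "v < length (G \<sigma>)" for u v
      using walk_within_D that unfolding pg_edges_G[OF \<sigma>] by simp
    show "0 < length (G \<sigma>)" "D < length (G \<sigma>)" using D_less by auto
    show "D \<le> k" if "(0, D) \<in> pg_edges (G \<sigma>) ^^ k" for k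
      using level_walk that unfolding pg_edges_G[OF \<sigma>] level_def by fastforce
  qed
  ultimately show ?thesis unfolding graph_class_def by simp
qed

lemma port_to_hub:
  assumes \<sigma>: "\<sigma> \<in> port_orders" and u: "D \<le> u" "u < n"
  shows "port (G \<sigma>) u (D - 1) = 0"
  unfolding port_def
proof (rule the_equality)
  have row: "G \<sigma> ! u = (D - 1) # \<sigma> ! (u - D)" using u by (simp add: nth_G row_def)
  then show "0 < length (G \<sigma> ! u) \<and> G \<sigma> ! u ! 0 = D - 1" by simp
  fix q assume "q < length (G \<sigma> ! u) \<and> G \<sigma> ! u ! q = D - 1"
  moreover have "distinct (G \<sigma> ! u)" using distinct_row[OF \<sigma> u(2)] u by (simp add: nth_G)
  ultimately show "q = 0" using row nth_eq_iff_index_eq[of "G \<sigma> ! u" q 0] by auto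
qed

text \<open>The view of a node of level \<ell> after t \<le> D - \<ell> rounds does not depend on the port orderings
  inside the clique: information from the clique needs D - \<ell> + 1 rounds to arrive, and the hub D - 1
  is always reached from the clique through port 0.\<close>

lemma run_independent_of_port_orders:
  assumes \<sigma>: "\<sigma> \<in> port_orders" and \<sigma>': "\<sigma>' \<in> port_orders"
  shows "v < n \<Longrightarrow> level v + t \<le> D \<Longrightarrow> run A (G \<sigma>) adv t v = run A (G \<sigma>') adv t v"
proof (induction t arbitrary: v)
  case 0
  have "set (G \<sigma> ! v) = set (G \<sigma>' ! v)"
    using set_row[OF \<sigma> 0(1)] set_row[OF \<sigma>' 0(1)] by (auto simp: nth_G[OF 0(1)])
  then have "length (G \<sigma> ! v) = length (G \<sigma>' ! v)"
    using distinct_row[OF \<sigma> 0(1)] distinct_row[OF \<sigma>' 0(1)] by (metis nth_G[OF 0(1)] distinct_card)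
  then show ?case by simp
next
  case (Suc t)
  have vD: "v < D" using Suc.prems by (simp add: level_def)
  have row_v: "G \<sigma> ! v = G \<sigma>' ! v" using vD Suc.prems(1) by (simp add: nth_G row_def)
  have agree: "run A (G \<sigma>) adv t u = run A (G \<sigma>') adv t u \<and> port (G \<sigma>) u v = port (G \<sigma>') u v"
    if u: "u \<in> set (G \<sigma> ! v)" for u
  proof
    have a: "adj v u" using u set_row[OF \<sigma> Suc.prems(1)] by (simp add: nth_G[OF Suc.prems(1)])
    then have "level u \<le> level v + 1" unfolding adj_def level_def by auto
    then show "run A (G \<sigma>) adv t u = run A (G \<sigma>') adv t u"
      using Suc.IH[OF adj_less[OF a]] Suc.prems(2) by simp
    show "port (G \<sigma>) u v = port (G \<sigma>') u v"
    proof (cases "u < D")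
      case True
      then show ?thesis using adj_less[OF a] by (simp add: port_def nth_G row_def)
    next
      case False
      then have "v = D - 1" using a vD unfolding adj_path_iff[OF vD] by auto
      with False show ?thesis using port_to_hub[OF \<sigma> _ adj_less[OF a]] port_to_hub[OF \<sigma>' _ adj_less[OF a]] by simp
    qed
  qed
  have "map (\<lambda>u. send A (run A (G \<sigma>) adv t u) (port (G \<sigma>) u v)) (G \<sigma> ! v) =
      map (\<lambda>u. send A (run A (G \<sigma>') adv t u) (port (G \<sigma>') u v)) (G \<sigma>' ! v)"
    using agree row_v by (intro map_cong) auto
  then show ?case
    using Suc.IH[OF Suc.prems(1)] Suc.prems(2) by simp
qed

lemma G_inj_on: "inj_on G port_orders"
proof (rule inj_onI, rule nth_equalityI)
  fix \<sigma> \<sigma>' assume \<sigma>: "\<sigma> \<in> port_orders" and \<sigma>': "\<sigma>' \<in> port_orders" and eq: "G \<sigma> = G \<sigma>'"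
  then show "length \<sigma> = length \<sigma>'" by (simp add: port_orders_def)
  fix j assume "j < length \<sigma>"
  then have "D + j < n" using \<sigma> by (simp add: port_orders_def)
  moreover have "G \<sigma> ! (D + j) = G \<sigma>' ! (D + j)" using eq by simp
  ultimately show "\<sigma> ! j = \<sigma>' ! j" by (simp add: nth_G row_def)
qed

lemma card_port_orders: "card port_orders = fact (n - D - 1) ^ (n - D)"
proof -
  let ?m = "n - D" and ?P = "\<lambda>j. permutations_of_set ({D..<n} - {D + j})"
  let ?list = "\<lambda>f. map f [0..<?m]"
  have "port_orders = ?list ` (PiE {..<?m} ?P)"
  proof (intro equalityI subsetI)
    fix \<sigma> assume \<sigma>: "\<sigma> \<in> port_orders"
    have "\<sigma> = ?list (restrict (\<lambda>j. \<sigma> ! j) {..<?m})"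
      using \<sigma> by (intro nth_equalityI) (auto simp: port_orders_def)
    moreover have "restrict (\<lambda>j. \<sigma> ! j) {..<?m} \<in> PiE {..<?m} ?P"
      using \<sigma> by (auto simp: port_orders_def)
    ultimately show "\<sigma> \<in> ?list ` (PiE {..<?m} ?P)" by blast
  next
    fix \<sigma> assume "\<sigma> \<in> ?list ` (PiE {..<?m} ?P)"
    then obtain f where "f \<in> PiE {..<?m} ?P" "\<sigma> = ?list f" by blast
    then show "\<sigma> \<in> port_orders" unfolding port_orders_def by (simp add: PiE_iff)
  qed
  moreover have "inj_on ?list (PiE {..<?m} ?P)"
  proof (rule inj_onI)
    fix f f' assume f: "f \<in> PiE {..<?m} ?P" and f': "f' \<in> PiE {..<?m} ?P" and "?list f = ?list f'"
    then have "f i = f' i" if "i \<in> {..<?m}" for i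
      using that by (metis atLeastLessThan_iff lessThan_iff map_eq_conv set_upt zero_le)
    then show "f = f'" using PiE_ext[OF f f'] by blast
  qed
  ultimately have "card port_orders = (\<Prod>j<?m. card (?P j))"
    by (simp add: card_image card_PiE)
  also have "\<dots> = (\<Prod>j<?m. fact (?m - 1))"
    by (rule prod.cong) auto
  finally show ?thesis by simp
qed

text \<open>The far end 0 of the path computes its output from the advice alone; an isomorphism onto
  that output, recorded as the list of images of 0, \<dots>, n-1, then pins down the graph.\<close>

lemma port_orders_eq_if_same_advice_and_iso:
  assumes \<sigma>: "\<sigma> \<in> port_orders" and \<sigma>': "\<sigma>' \<in> port_orders"
    and adv: "\<And>v. v < n \<Longrightarrow> adv v = adv' v"
    and iso: "pg_iso_map f (G \<sigma>) (out A (run A (G \<sigma>) adv D 0))"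
    and iso': "pg_iso_map f' (G \<sigma>') (out A (run A (G \<sigma>') adv' D 0))"
    and f: "\<And>v. v < n \<Longrightarrow> f v = f' v"
  shows "\<sigma> = \<sigma>'"
proof -
  have wf: "wf_pgraph (G \<sigma>)" "wf_pgraph (G \<sigma>')"
    using G_in_graph_class[OF \<sigma>] G_in_graph_class[OF \<sigma>'] by (auto simp: graph_class_def)
  have "run A (G \<sigma>) adv D 0 = run A (G \<sigma>') adv D 0"
    using run_independent_of_port_orders[OF \<sigma> \<sigma>', where v = 0 and t = D] D_less
    by (simp add: level_def)
  also have "\<dots> = run A (G \<sigma>') adv' D 0"
    using run_cong_advice[OF wf(2), of adv adv' 0 A D] adv D_less by simp
  finally have out: "out A (run A (G \<sigma>) adv D 0) = out A (run A (G \<sigma>') adv' D 0)" by simp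
  have fs: "map f [0..<n] = map f' [0..<n]" using f by simp
  have "G \<sigma> = pg_pullback (out A (run A (G \<sigma>) adv D 0)) (map f [0..<n])"
    using pg_pullback_iso[OF iso wf(1)] by simp
  also have "\<dots> = pg_pullback (out A (run A (G \<sigma>') adv' D 0)) (map f' [0..<n])"
    unfolding out fs ..
  also have "\<dots> = G \<sigma>'"
    using pg_pullback_iso[OF iso' wf(2)] by simp
  finally have "G \<sigma> = G \<sigma>'" .
  then show ?thesis using G_inj_on \<sigma> \<sigma>' by (auto dest: inj_onD)
qed

lemma card_port_orders_le:
  assumes "solvable_with anon_TR D (graph_class n D) s"
  shows "card port_orders \<le> (2 ^ (s + 1)) ^ n * n ^ n"
proof -
  obtain A where A: "\<forall>g \<in> graph_class n D. \<exists>adv. advice_size g adv \<le> s \<and> anon_TR A g adv D"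
    using assms unfolding solvable_with_def by blast
  have "\<exists>adv f. advice_size (G \<sigma>) adv \<le> s \<and> pg_iso_map f (G \<sigma>) (out A (run A (G \<sigma>) adv D 0))"
    if \<sigma>: "\<sigma> \<in> port_orders" for \<sigma>
  proof -
    obtain adv where "advice_size (G \<sigma>) adv \<le> s" "anon_TR A (G \<sigma>) adv D"
      using A G_in_graph_class[OF \<sigma>] by blast
    moreover from this(2) obtain f where "pg_iso_map f (G \<sigma>) (out A (run A (G \<sigma>) adv D 0))"
      unfolding anon_TR_def pg_isomorphic_def using D_less by auto
    ultimately show ?thesis by blast
  qed
  then obtain adv f where af: "\<And>\<sigma>. \<sigma> \<in> port_orders \<Longrightarrow> advice_size (G \<sigma>) (adv \<sigma>) \<le> s \<and>
      pg_iso_map (f \<sigma>) (G \<sigma>) (out A (run A (G \<sigma>) (adv \<sigma>) D 0))"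
    by metis
  define code where "code \<sigma> = (map (adv \<sigma>) [0..<n], map (f \<sigma>) [0..<n])" for \<sigma>
  define Adv where "Adv = {xs. set xs \<subseteq> {bs :: bool list. length bs \<le> s} \<and> length xs = n}"
  define Nodes where "Nodes = {xs. set xs \<subseteq> {..<n} \<and> length xs = n}"
  have "inj_on code port_orders"
  proof (rule inj_onI)
    fix \<sigma> \<sigma>' assume "\<sigma> \<in> port_orders" "\<sigma>' \<in> port_orders" "code \<sigma> = code \<sigma>'"
    then show "\<sigma> = \<sigma>'"
      using port_orders_eq_if_same_advice_and_iso[of \<sigma> \<sigma>' "adv \<sigma>" "adv \<sigma>'" "f \<sigma>" A "f \<sigma>'"] af
      unfolding code_def by (simp add: map_eq_conv)
  qed
  moreover have "code ` port_orders \<subseteq> Adv \<times> Nodes"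
  proof (rule image_subsetI)
    fix \<sigma> assume \<sigma>: "\<sigma> \<in> port_orders"
    have "length (adv \<sigma> v) \<le> s" if "v < n" for v
      using advice_size_ge[of v "G \<sigma>" "adv \<sigma>"] af[OF \<sigma>] that by simp
    moreover have "bij_betw (f \<sigma>) {0..<n} {0..<n}"
      using af[OF \<sigma>] bij_betw_same_card unfolding pg_iso_map_def by fastforce
    ultimately show "code \<sigma> \<in> Adv \<times> Nodes"
      unfolding code_def Adv_def Nodes_def by (auto dest: bij_betwE)
  qed
  moreover have "finite Adv" "finite Nodes"
    unfolding Adv_def Nodes_def
    by (simp_all add: finite_lists_length_eq finite_lists_length_le[of UNIV s, simplified])
  ultimately have "card port_orders \<le> card Adv * card Nodes"
    by (metis card_cartesian_product card_inj_on_le finite_cartesian_product)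
  also have "\<dots> \<le> (2 ^ (s + 1)) ^ n * n ^ n"
  proof (rule mult_mono)
    have "card {bs :: bool list. length bs \<le> s} = (\<Sum>i\<le>s. 2 ^ i)"
      using card_lists_length_le[of "UNIV :: bool set" s] by (simp add: card_UNIV_bool)
    also have "\<dots> < 2 ^ (s + 1)" by (induction s) auto
    finally have "card {bs :: bool list. length bs \<le> s} \<le> 2 ^ (s + 1)" by simp
    moreover have "card Adv = card {bs :: bool list. length bs \<le> s} ^ n"
      unfolding Adv_def
      by (rule card_lists_length_eq) (use finite_lists_length_le[of "UNIV :: bool set" s] in simp)
    ultimately show "card Adv \<le> (2 ^ (s + 1)) ^ n" by (metis power_mono zero_le)
    show "card Nodes \<le> n ^ n" unfolding Nodes_def by (simp add: card_lists_length_eq)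
  qed simp_all
  finally show ?thesis .
qed

end

section \<open>From the counting bound to \<Omega>(n log n)\<close>

lemma self_power_le_fact_double: "(j :: nat) ^ j \<le> fact (2 * j)"
proof -
  have "j ^ j = (\<Prod>i\<in>{j..<2 * j}. j)" by simp
  also have "\<dots> \<le> (\<Prod>i\<in>{j..<2 * j}. Suc i)" by (rule prod_mono) auto
  also have "\<dots> \<le> (\<Prod>i\<in>{j..<2 * j}. Suc i) * fact j" by simp
  also have "\<dots> = fact (2 * j)"
    using fact_split[of j "2 * j", where 'a = nat] by (simp del: of_nat_prod add: of_nat_id)
  finally show ?thesis .
qed

lemma log_fact_ge:
  assumes "4 \<le> m"
  shows "real m / 4 * log 2 (real m / 4) \<le> log 2 (fact (m - 1))"
proof -
  define j where "j = (m - 1) div 2"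
  have j: "real m / 4 \<le> real j" using assms unfolding j_def by linarith
  have "real m / 4 * log 2 (real m / 4) \<le> real j * log 2 (real j)"
    using j assms by (intro mult_mono) auto
  also have "\<dots> = log 2 (real (j ^ j))"
    by (simp add: log_nat_power)
  also have "\<dots> \<le> log 2 (fact (m - 1))"
  proof -
    have "2 * j \<le> m - 1" unfolding j_def by simp
    then have "j ^ j \<le> (fact (m - 1) :: nat)"
      by (rule order.trans[OF self_power_le_fact_double fact_mono])
    then have "real (j ^ j) \<le> fact (m - 1)"
      by (metis of_nat_fact of_nat_le_iff)
    moreover have "0 < j" using assms unfolding j_def by linarith
    ultimately show ?thesis by simp
  qed
  finally show ?thesis .
qed

lemma advice_ge_of_count:
  fixes \<beta> :: real and n m s :: nat
  assumes \<beta>: "0 < \<beta>" "\<beta> \<le> 1" and n: "32 \<le> \<beta>\<^sup>2 * n" and m: "\<beta> * n \<le> m"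
    and count: "fact (m - 1) ^ m \<le> (2 ^ (s + 1)) ^ n * n ^ n"
  shows "\<beta>\<^sup>2 / 16 * n * log 2 n \<le> s"
proof -
  define L where "L = log 2 (real n)"
  have "\<beta>\<^sup>2 \<le> 1" using \<beta> by (simp add: power_le_one)
  then have n32: "32 \<le> real n" using n mult_right_mono[of "\<beta>\<^sup>2" 1 "real n"] by simp
  then have L1: "1 \<le> L" unfolding L_def by simp
  have "\<beta> * (\<beta> * n) \<le> \<beta> * n" using \<beta> n32 by (simp add: mult_left_le_one_le)
  then have m4: "4 \<le> m" using n m by (simp add: power2_eq_square mult.assoc)
  have count_log: "real m * log 2 (fact (m - 1)) \<le> real n * (real s + 1 + L)"
  proof -
    have "real (fact (m - 1) ^ m) \<le> real ((2 ^ (s + 1)) ^ n * n ^ n)"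
      using count by (rule of_nat_mono)
    then have "(fact (m - 1) :: real) ^ m \<le> (2 ^ (s + 1)) ^ n * real n ^ n"
      by simp
    then have "log 2 ((fact (m - 1) :: real) ^ m) \<le> log 2 ((2 ^ (s + 1)) ^ n * real n ^ n)"
      using n32 by (subst log_le_cancel_iff) auto
    also have "\<dots> = real n * (real s + 1) + real n * L"
      using n32 by (simp add: log_mult log_nat_power L_def algebra_simps)
    finally show ?thesis by (simp add: log_nat_power algebra_simps)
  qed
  have "L + 1 \<le> L + log 2 (\<beta>\<^sup>2 * n / 16)"
    using n by simp
  also have "\<dots> = log 2 ((\<beta> * n / 4)\<^sup>2)"
  proof -
    have sq: "(\<beta> * n / 4)\<^sup>2 = real n * (\<beta>\<^sup>2 * n / 16)" by (simp add: power2_eq_square)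
    show ?thesis
      unfolding L_def sq by (rule log_mult_pos[symmetric]) (use \<beta> n32 in auto)
  qed
  also have "\<dots> = 2 * log 2 (\<beta> * n / 4)"
    using \<beta> n32 by (simp add: log_nat_power)
  also have "\<dots> \<le> 2 * log 2 (real m / 4)"
  proof -
    have "0 < \<beta> * n" using \<beta> n32 by simp
    then have "log 2 (\<beta> * n / 4) \<le> log 2 (real m / 4)"
      using m by (subst log_le_cancel_iff) auto
    then show ?thesis by simp
  qed
  finally have log_m: "L / 2 \<le> log 2 (real m / 4)" by simp
  have "(\<beta> * n)\<^sup>2 \<le> real m * real m"
    using m \<beta> by (simp add: power2_eq_square mult_mono)
  then have "(\<beta> * n)\<^sup>2 * (L / 2) \<le> real m * real m * log 2 (real m / 4)"
    using log_m L1 by (intro mult_mono) auto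
  also have "\<dots> = 4 * real m * (real m / 4 * log 2 (real m / 4))" by simp
  also have "\<dots> \<le> 4 * real m * log 2 (fact (m - 1))"
    by (rule mult_left_mono[OF log_fact_ge[OF m4]]) simp
  also have "\<dots> \<le> 4 * real n * (real s + 1 + L)" using count_log by simp
  finally have "real n * (\<beta>\<^sup>2 * n * L) \<le> real n * (8 * (real s + 1 + L))"
    by (simp add: power2_eq_square algebra_simps)
  then have "\<beta>\<^sup>2 * n * L \<le> 8 * (real s + 1 + L)" using n32 by simp
  moreover have "32 * L \<le> \<beta>\<^sup>2 * n * L" using n L1 by (intro mult_right_mono) auto
  ultimately have "\<beta>\<^sup>2 * n * L \<le> 16 * real s" using L1 by (smt (verit))
  then show ?thesis unfolding L_def by simp
qed

theorem corollary5p5: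
  fixes \<alpha> :: real
  assumes "0 < \<alpha>" and "\<alpha> < 1"
  shows "\<exists>c1 c2 :: real. \<exists>N :: nat. c1 > 0 \<and> c2 > 0 \<and>
    (\<forall>n D. n \<ge> N \<longrightarrow> 1 \<le> D \<longrightarrow> real D \<le> \<alpha> * real n \<longrightarrow>
       real (min_advice labeled_TR D (graph_class n D)) \<le> c2 * real n * log 2 (real n) \<and>
       c1 * real n * log 2 (real n) \<le> real (min_advice anon_TR D (graph_class n D)))"
proof -
  define \<beta> where "\<beta> = 1 - \<alpha>"
  have \<beta>: "0 < \<beta>" "\<beta> \<le> 1" using assms by (auto simp: \<beta>_def)
  show ?thesis
  proof (intro exI conjI allI impI)
    show "0 < \<beta>\<^sup>2 / 16" "(0 :: real) < 4" using \<beta> by auto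
    fix n D :: nat
    assume N: "nat \<lceil>32 / \<beta>\<^sup>2\<rceil> \<le> n" and D: "1 \<le> D" "real D \<le> \<alpha> * real n"
    have "32 / \<beta>\<^sup>2 \<le> real n" using N by linarith
    then have n: "32 \<le> \<beta>\<^sup>2 * n" using \<beta> by (simp add: field_simps)
    moreover have "\<beta>\<^sup>2 \<le> 1" using \<beta> by (simp add: power_le_one)
    ultimately have "32 \<le> real n" using mult_right_mono[of "\<beta>\<^sup>2" 1 "real n"] by simp
    then have n3: "3 \<le> n" by simp
    have "\<alpha> * real n < real n" using assms \<open>32 \<le> real n\<close> by simp
    then have Dn: "D < n" using D(2) by linarith
    have m: "\<beta> * n \<le> real (n - D)" using D(2) Dn by (simp add: \<beta>_def of_nat_diff algebra_simps)
    interpret lollipop n D using D(1) Dn by unfold_locales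
    have labeled: "solvable_with labeled_TR D (graph_class n D) (record_bits n)"
      by (rule solvable_labeled_record_bits)
    show "real (min_advice labeled_TR D (graph_class n D)) \<le> 4 * real n * log 2 (real n)"
      using min_advice_le[OF labeled] record_bits_le[OF n3] by linarith
    have "card port_orders \<le> (2 ^ (min_advice anon_TR D (graph_class n D) + 1)) ^ n * n ^ n"
      by (rule card_port_orders_le[OF solvable_with_min_advice[OF solvable_anon_if_labeled[OF labeled]]])
    then show "\<beta>\<^sup>2 / 16 * real n * log 2 (real n) \<le> real (min_advice anon_TR D (graph_class n D))"
      using advice_ge_of_count[OF \<beta> n m] D(1) by (simp add: card_port_orders Suc_diff_Suc)
  qed
qed

end
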